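(* In the M/M/1 setting below, $\mathrm{SW}^P_{opt}\le\mathrm{SW}^C_{opt}=\mathrm{SW}^S_{opt}$ holds in each of the following cases: (i) $\xi(0)\ge\bar\lambda$; (ii) $\xi(0)<\bar\lambda$ and $\lambda_{\max}\le(1+\epsilon)\lambda$, where $\epsilon=\sqrt{C/(R\mu)}$.
   Context: Setting: an M/M/1 queue with true (deterministic) Poisson arrival rate $\lambda>0$ and exponential service times with rate $\mu$, so $W(x)=1/(\mu-x)$ for $x\in[0,\mu)$. Each served customer receives reward $R$, pays fee $p$ (a transfer payment from the social optimizer's viewpoint), and incurs waiting cost $C>0$ per unit time, with $R>C/\mu$. Customers' beliefs about the arrival rate are described by a non-degenerate nonnegative random variable $\Lambda$ whose support has minimum $\lambda_{\min}$ and maximum $\lambda_{\max}$, with $0\le\lambda_{\min}<\lambda<\lambda_{\max}<\mu$. For $0\le p<R-C/\mu$, $\xi(p)=\mu-C/(R-p)$ (so $\xi(0)=\mu-C/R$). Let $\bar\lambda=\mu-1/\mathbb{E}[1/(\mu-\Lambda)]$. Joining probabilities: classical $q^C(p)=\min\{\xi(p)/\lambda,1\}$; shared belief $q^S(p)=1$ if $C\,\mathbb{E}[W(\Lambda)]\le R-p$, otherwise the unique $q\in[0,1)$ with $C\,\mathbb{E}[W(q\Lambda)]=R-p$; private belief $Q(p)=\min\{\xi(p)/\Lambda,1\}$. Social welfare rates: $\mathrm{SW}^C(p)=\lambda q^C(p)\,(R-C\,W(\lambda q^C(p)))$, $\mathrm{SW}^S(p)=\lambda q^S(p)\,(R-C\,W(\lambda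 q^S(p)))$, $\mathrm{SW}^P(p)=\mathbb{E}[\lambda Q(p)\,(R-C\,W(\lambda Q(p)))]$. Optimal values: $\mathrm{SW}^X_{opt}=\sup_{0\le p<R-C/\mu}\mathrm{SW}^X(p)$ for $X\in\{C,S,P\}$. *)

theory Defs
  imports "HOL-Probability.Probability"
begin

text \<open>M/M/1 sojourn time W(x) = 1/(mu - x), intended for 0 <= x < mu.\<close>
definition W :: "real \<Rightarrow> real \<Rightarrow> real" where
  "W mu x = 1 / (mu - x)"

definition xi :: "real \<Rightarrow> real \<Rightarrow> real \<Rightarrow> real \<Rightarrow> real" where
  "xi mu C R p = mu - C / (R - p)"

definition lbar :: "'a measure \<Rightarrow> ('a \<Rightarrow> real) \<Rightarrow> real \<Rightarrow> real" where
  "lbar M L mu = mu - 1 / (\<integral>\<omega>. 1 / (mu - L \<omega>) \<partial>M)"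

definition qC :: "real \<Rightarrow> real \<Rightarrow> real \<Rightarrow> real \<Rightarrow> real \<Rightarrow> real" where
  "qC lam mu C R p = min (xi mu C R p / lam) 1"

definition qS :: "'a measure \<Rightarrow> ('a \<Rightarrow> real) \<Rightarrow> real \<Rightarrow> real \<Rightarrow> real \<Rightarrow> real \<Rightarrow> real" where
  "qS M L mu C R p =
     (if C * (\<integral>\<omega>. W mu (L \<omega>) \<partial>M) \<le> R - p then 1
      else (THE q. 0 \<le> q \<and> q < 1 \<and> C * (\<integral>\<omega>. W mu (q * L \<omega>) \<partial>M) = R - p))"

text \<open>Private-belief joining probability min{xi(p)/Lambda, 1}, with the convention
  xi(p)/0 = +infinity (so the minimum is 1 when Lambda = 0).\<close>
definition QP :: "real \<Rightarrow> real \<Rightarrow> real \<Rightarrow> real \<Rightarrow> real \<Rightarrow> real" where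
  "QP mu C R p l = (if l \<le> xi mu C R p then 1 else xi mu C R p / l)"

definition SW :: "real \<Rightarrow> real \<Rightarrow> real \<Rightarrow> real \<Rightarrow> real \<Rightarrow> real" where
  "SW lam mu C R q = lam * q * (R - C * W mu (lam * q))"

definition SWC :: "real \<Rightarrow> real \<Rightarrow> real \<Rightarrow> real \<Rightarrow> real \<Rightarrow> real" where
  "SWC lam mu C R p = SW lam mu C R (qC lam mu C R p)"

definition SWS :: "'a measure \<Rightarrow> ('a \<Rightarrow> real) \<Rightarrow> real \<Rightarrow> real \<Rightarrow> real \<Rightarrow> real \<Rightarrow> real \<Rightarrow> real" where
  "SWS M L lam mu C R p = SW lam mu C R (qS M L mu C R p)"

definition SWP :: "'a measure \<Rightarrow> ('a \<Rightarrow> real) \<Rightarrow> real \<Rightarrow> real \<Rightarrow> real \<Rightarrow> real \<Rightarrow> real \<Rightarrow> real" where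
  "SWP M L lam mu C R p = (\<integral>\<omega>. SW lam mu C R (QP mu C R p (L \<omega>)) \<partial>M)"

definition opt :: "real \<Rightarrow> real \<Rightarrow> real \<Rightarrow> (real \<Rightarrow> real) \<Rightarrow> real" where
  "opt mu C R f = (SUP p\<in>{0..<R - C / mu}. f p)"

end

theory Submission
  imports Defs
begin

text \<open>
  Each of the three welfare rates is the welfare \<open>x (R - C W(x))\<close> of an effective arrival
  rate \<open>x = \<lambda> q \<le> \<lambda>\<close> (pointwise in \<open>\<Lambda>\<close> for private beliefs). Writing
  \<open>a = \<mu> - x\<close>, this welfare is a constant minus the convex function \<open>R a + C \<mu> / a\<close>, so on
  \<open>x \<le> \<lambda>\<close> it is maximal at \<open>m = min (\<mu> (1 - \<epsilon>)) \<lambda>\<close>. Hence all three optima are at most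
  the welfare at \<open>m\<close>, and the classical fee with \<open>\<xi>(p) = \<mu> (1 - \<epsilon>)\<close> attains it.

  Under a shared belief, \<open>q\<^sup>S\<close> inverts \<open>g(q) = E[W(q \<Lambda>)]\<close>, which is continuous and, as
  \<open>\<Lambda>\<close> is not a.s. zero, strictly increasing; so the fee \<open>R - C g(m/\<lambda>)\<close> induces
  \<open>q\<^sup>S = m/\<lambda>\<close>, and it is admissible iff \<open>C g(m/\<lambda>) \<le> R\<close>. In case (i) this holds because
  \<open>C g(1) \<le> R\<close>; in case (ii) because \<open>(m/\<lambda>) \<lambda>\<^sub>m\<^sub>a\<^sub>x \<le> \<mu> (1 - \<epsilon>) (1 + \<epsilon>) = \<mu> - C/R\<close> bounds
  every sojourn time by \<open>R/C\<close>.
\<close>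

definition welfare :: "real \<Rightarrow> real \<Rightarrow> real \<Rightarrow> real \<Rightarrow> real" where
  "welfare mu C R x = x * (R - C * W mu x)"

definition optimal_rate :: "real \<Rightarrow> real \<Rightarrow> real \<Rightarrow> real" where
  "optimal_rate mu C R = mu * (1 - sqrt (C / (R * mu)))"

lemma SW_eq_welfare: "SW lam mu C R q = welfare mu C R (lam * q)"
  by (simp add: SW_def welfare_def)

lemma welfare_eq:
  "x < mu \<Longrightarrow> welfare mu C R x = mu * R + C - (R * (mu - x) + C * mu / (mu - x))"
  by (simp add: welfare_def W_def field_simps)

lemma mult_add_divide_le:
  fixes a b c k :: real
  assumes "0 < a" "0 < b" "0 \<le> (a - b) * (c * a * b - k)"
  shows "c * b + k / b \<le> c * a + k / a"
proof -
  have "(c * a + k / a) - (c * b + k / b) = (a - b) * (c * a * b - k) / (a * b)"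
    using assms by (simp add: field_simps)
  moreover have "0 \<le> (a - b) * (c * a * b - k) / (a * b)"
    using assms by simp
  ultimately show ?thesis by linarith
qed

lemma sqrt_cost_ratio_bounds:
  assumes "0 < C" "0 < mu" "C / mu < R"
  shows "0 < sqrt (C / (R * mu))" "sqrt (C / (R * mu)) < 1"
proof -
  have "0 < C / (R * mu)" "C / (R * mu) < 1"
    using assms by (auto simp: field_simps)
  then show "0 < sqrt (C / (R * mu))" "sqrt (C / (R * mu)) < 1" by auto
qed

lemma welfare_le_optimal:
  fixes x lam mu C R :: real
  assumes "0 < C" "0 < mu" "C / mu < R" "x \<le> lam" "lam < mu"
  shows "welfare mu C R x \<le> welfare mu C R (min (optimal_rate mu C R) lam)"
proof -
  define s where "s = sqrt (C / (R * mu))"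
  define b where "b = mu - min (optimal_rate mu C R) lam"
  have R: "0 < R" using divide_pos_pos [OF assms(1,2)] assms(3) by linarith
  have s: "0 < s" "s < 1" using sqrt_cost_ratio_bounds[OF assms(1-3)] by (auto simp: s_def)
  have Cmu: "C * mu = R * (mu * s)\<^sup>2"
    using assms R by (simp add: s_def power2_eq_square field_simps)
  have b: "0 < b" using assms s unfolding b_def optimal_rate_def s_def[symmetric] by auto
  \<comment> \<open>\<open>R a + C mu / a\<close> is minimal at \<open>a = mu s\<close> and increasing beyond it\<close>
  have "R * b + C * mu / b \<le> R * (mu - x) + C * mu / (mu - x)"
  proof (rule mult_add_divide_le)
    show "0 \<le> (mu - x - b) * (R * (mu - x) * b - C * mu)"
    proof (cases "optimal_rate mu C R \<le> lam")
      case True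
      then have "b = mu * s" by (simp add: b_def optimal_rate_def s_def algebra_simps)
      then have "C * mu = R * b\<^sup>2" using Cmu by simp
      then have "(mu - x - b) * (R * (mu - x) * b - C * mu) = R * b * (mu - x - b)\<^sup>2"
        by (simp add: power2_eq_square algebra_simps)
      then show ?thesis using R b by simp
    next
      case False
      then have "b = mu - lam" "mu * s < b"
        by (auto simp: b_def optimal_rate_def s_def algebra_simps)
      have "C * mu \<le> R * b\<^sup>2"
        unfolding Cmu using \<open>mu * s < b\<close> s assms R
        by (intro mult_left_mono power_mono) auto
      also have "\<dots> \<le> R * (mu - x) * b"
        using R b assms \<open>b = mu - lam\<close>
        by (simp add: power2_eq_square mult_right_mono mult_left_mono)
      finally show ?thesis using assms \<open>b = mu - lam\<close> by (intro mult_nonneg_nonneg) auto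
    qed
  qed (use assms b in auto)
  then show ?thesis
    using assms b by (simp add: welfare_eq b_def [symmetric] min.strict_coboundedI2)
qed

lemma optimal_rate_pos: "0 < C \<Longrightarrow> 0 < mu \<Longrightarrow> C / mu < R \<Longrightarrow> 0 < optimal_rate mu C R"
  using sqrt_cost_ratio_bounds by (simp add: optimal_rate_def)

lemma optimal_fraction_bounds:
  "0 < lam \<Longrightarrow> 0 < C \<Longrightarrow> 0 < mu \<Longrightarrow> C / mu < R \<Longrightarrow> min (optimal_rate mu C R) lam / lam \<in> {0<..1}"
  using optimal_rate_pos by simp

lemma opt_eqI:
  assumes "\<And>p. p \<in> {0..<R - C / mu} \<Longrightarrow> f p \<le> v"
    and "p \<in> {0..<R - C / mu}" "f p = v"
  shows "opt mu C R f = v"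
  unfolding opt_def by (rule cSup_eq_maximum) (use assms in force)+

lemma opt_leI:
  assumes "C / mu < R" "\<And>p. p \<in> {0..<R - C / mu} \<Longrightarrow> f p \<le> v"
  shows "opt mu C R f \<le> v"
  unfolding opt_def using assms by (intro cSUP_least) auto

lemma xi_pos:
  assumes "0 < C" "0 < mu" "C / mu < R - p"
  shows "0 < xi mu C R p"
proof -
  have "0 < R - p" using divide_pos_pos[OF assms(1,2)] assms(3) by linarith
  then show ?thesis using assms by (simp add: xi_def field_simps)
qed

lemma opt_SWC:
  assumes "0 < lam" "lam < mu" "0 < C" "C / mu < R"
  shows "opt mu C R (SWC lam mu C R) = welfare mu C R (min (optimal_rate mu C R) lam)"
proof -
  define s where "s = sqrt (C / (R * mu))"
  have mu: "0 < mu" using assms by linarith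
  have R: "0 < R" using divide_pos_pos[OF assms(3) mu] assms(4) by linarith
  have s: "0 < s" "s < 1" using sqrt_cost_ratio_bounds[OF assms(3) mu assms(4)] by (auto simp: s_def)
  have SWC_eq: "SWC lam mu C R p = welfare mu C R (min (xi mu C R p) lam)" for p
    using assms(1) by (simp add: SWC_def SW_eq_welfare qC_def min_def field_simps)
  define p0 where "p0 = R - C / (mu * s)"
  have "C = R * mu * s\<^sup>2"
    using assms mu R by (simp add: s_def field_simps)
  then have "C / (mu * s) = R * s"
    using s mu by (simp add: power2_eq_square field_simps)
  then have "C / (mu * s) \<le> R"
    using s R by simp
  moreover have "C / mu < C / (mu * s)"
    using s mu assms by (simp add: field_simps)
  ultimately have "p0 \<in> {0..<R - C / mu}" by (simp add: p0_def)
  moreover have "xi mu C R p0 = optimal_rate mu C R"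
    using s mu assms by (simp add: xi_def p0_def optimal_rate_def s_def [symmetric] field_simps)
  ultimately show ?thesis
    using assms mu by (intro opt_eqI [of _ _ _ _ _ p0]) (auto simp: SWC_eq intro: welfare_le_optimal)
qed

lemma opt_SWP_le:
  assumes "prob_space M" "0 < lam" "lam < mu" "0 < C" "C / mu < R"
  shows "opt mu C R (SWP M L lam mu C R) \<le> welfare mu C R (min (optimal_rate mu C R) lam)"
proof (rule opt_leI)
  interpret prob_space M by fact
  define v where "v = welfare mu C R (min (optimal_rate mu C R) lam)"
  have mu: "0 < mu" using assms by linarith
  have le_v: "x \<le> lam \<Longrightarrow> welfare mu C R x \<le> v" for x
    unfolding v_def using assms mu by (intro welfare_le_optimal) auto
  have "0 \<le> v" using le_v[of 0] assms by (simp add: welfare_def)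
  fix p assume p: "p \<in> {0..<R - C / mu}"
  then have "0 < xi mu C R p" using assms mu by (intro xi_pos) auto
  then have "QP mu C R p l \<le> 1" for l
    by (simp add: QP_def)
  then have "SW lam mu C R (QP mu C R p (L \<omega>)) \<le> v" for \<omega>
    using assms by (simp add: SW_eq_welfare le_v mult_left_le)
  then have "SWP M L lam mu C R p \<le> (\<integral>\<omega>. v \<partial>M)"
    unfolding SWP_def using \<open>0 \<le> v\<close> by (intro integral_mono') auto
  then show "SWP M L lam mu C R p \<le> v" by (simp add: prob_space)
qed (use assms in auto)

lemma unit_mult_le: "q \<in> {0..1} \<Longrightarrow> 0 \<le> l \<Longrightarrow> l \<le> lmax \<Longrightarrow> q * l \<le> (lmax::real)"
  using mult_left_le_one_le [of l q] by simp

lemma W_bounds: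
  assumes "x \<le> lmax" "lmax < mu"
  shows "0 < W mu x" "W mu x \<le> 1 / (mu - lmax)"
  using assms by (simp_all add: W_def frac_le)

lemma W_scaled_lipschitz:
  assumes "a \<in> {0..1}" "b \<in> {0..1}" "0 \<le> l" "l \<le> lmax" "lmax < mu"
  shows "\<bar>W mu (a * l) - W mu (b * l)\<bar> \<le> lmax / (mu - lmax)\<^sup>2 * \<bar>a - b\<bar>"
proof -
  have "a * l \<le> l" "b * l \<le> l" using assms by (auto intro: mult_left_le_one_le)
  then have d: "mu - lmax \<le> mu - a * l" "mu - lmax \<le> mu - b * l" using assms by auto
  then have "(mu - lmax)\<^sup>2 \<le> (mu - a * l) * (mu - b * l)"
    using assms by (simp add: power2_eq_square mult_mono)
  moreover have "W mu (a * l) - W mu (b * l) = (a - b) * l / ((mu - a * l) * (mu - b * l))"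
    using d assms by (simp add: W_def field_simps)
  moreover have "\<bar>a - b\<bar> * l / ((mu - a * l) * (mu - b * l)) \<le> \<bar>a - b\<bar> * lmax / (mu - lmax)\<^sup>2"
    using calculation(1) assms by (intro frac_le mult_left_mono) auto
  ultimately show ?thesis
    using assms d by (simp add: abs_mult mult.commute)
qed

locale bounded_belief = prob_space M for M :: "'a measure" +
  fixes L :: "'a \<Rightarrow> real" and mu lmax :: real
  assumes L_measurable [measurable]: "L \<in> borel_measurable M"
    and AE_L_bounds: "AE \<omega> in M. 0 \<le> L \<omega> \<and> L \<omega> \<le> lmax"
    and lmax_less: "lmax < mu"
begin

definition mean_sojourn :: "real \<Rightarrow> real" where
  "mean_sojourn q = (\<integral>\<omega>. W mu (q * L \<omega>) \<partial>M)"

lemma lmax_nonneg: "0 \<le> lmax"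
proof -
  have "AE \<omega> in M. 0 \<le> lmax" using AE_L_bounds by eventually_elim auto
  then show ?thesis by simp
qed

lemma mean_sojourn_0: "mean_sojourn 0 = 1 / mu"
  by (simp add: mean_sojourn_def W_def prob_space)

lemma integrable_W_scaled:
  assumes "q \<in> {0..1}"
  shows "integrable M (\<lambda>\<omega>. W mu (q * L \<omega>))"
proof (rule integrable_const_bound [where B = "1 / (mu - lmax)"])
  show "AE \<omega> in M. norm (W mu (q * L \<omega>)) \<le> 1 / (mu - lmax)"
    using AE_L_bounds
  proof eventually_elim
    case (elim \<omega>)
    then have "q * L \<omega> \<le> lmax" using assms by (simp add: unit_mult_le)
    then show ?case using W_bounds [OF _ lmax_less] by (simp add: less_imp_le)
  qed
qed (simp add: W_def)

lemma lipschitz_mean_sojourn: "(lmax / (mu - lmax)\<^sup>2)-lipschitz_on {0..1} mean_sojourn"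
proof (rule lipschitz_onI)
  fix a b :: real assume ab: "a \<in> {0..1}" "b \<in> {0..1}"
  have "mean_sojourn a - mean_sojourn b = (\<integral>\<omega>. W mu (a * L \<omega>) - W mu (b * L \<omega>) \<partial>M)"
    using integrable_W_scaled [OF ab(1)] integrable_W_scaled [OF ab(2)]
    by (simp add: mean_sojourn_def)
  also have "\<bar>\<dots>\<bar> \<le> lmax / (mu - lmax)\<^sup>2 * \<bar>a - b\<bar>"
  proof (rule integral_abs_bound [THEN order_trans], rule integral_le_const)
    show "AE \<omega> in M. \<bar>W mu (a * L \<omega>) - W mu (b * L \<omega>)\<bar> \<le> lmax / (mu - lmax)\<^sup>2 * \<bar>a - b\<bar>"
      using AE_L_bounds by eventually_elim (rule W_scaled_lipschitz [OF ab _ _ lmax_less], auto)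
  qed (use integrable_W_scaled [OF ab(1)] integrable_W_scaled [OF ab(2)] in auto)
  finally show "dist (mean_sojourn a) (mean_sojourn b) \<le> lmax / (mu - lmax)\<^sup>2 * dist a b"
    by (simp add: dist_real_def)
qed (use lmax_nonneg in simp)

lemma continuous_on_mean_sojourn: "continuous_on {0..1} mean_sojourn"
  using lipschitz_mean_sojourn by (rule lipschitz_on_continuous_on)


lemma mu_pos: "0 < mu"
  using lmax_nonneg lmax_less by linarith

lemma qS_eq:
  "qS M L mu C R p = (if C * mean_sojourn 1 \<le> R - p then 1
     else THE q. 0 \<le> q \<and> q < 1 \<and> C * mean_sojourn q = R - p)"
  by (simp add: qS_def mean_sojourn_def)

lemma lbar_eq: "lbar M L mu = mu - 1 / mean_sojourn 1"
  by (simp add: lbar_def mean_sojourn_def W_def)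

context
  assumes L_nonzero: "\<not> (AE \<omega> in M. L \<omega> = 0)"
begin

lemma strict_mono_on_mean_sojourn: "strict_mono_on {0..1} mean_sojourn"
proof (rule strict_mono_onI)
  fix a b :: real assume ab: "a \<in> {0..1}" "b \<in> {0..1}" "a < b"
  have "emeasure M {\<omega> \<in> space M. L \<omega> \<noteq> 0} \<noteq> 0"
    using L_nonzero by (auto simp: AE_iff_measurable [OF _ refl])
  moreover have "AE \<omega> in M. W mu (a * L \<omega>) \<le> W mu (b * L \<omega>) \<and>
      (L \<omega> \<noteq> 0 \<longrightarrow> W mu (a * L \<omega>) \<noteq> W mu (b * L \<omega>))"
    using AE_L_bounds
  proof eventually_elim
    case (elim \<omega>)
    then have "b * L \<omega> < mu" using ab lmax_less unit_mult_le [of b] by fastforce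
    moreover have "a * L \<omega> \<le> b * L \<omega>" using ab elim by (intro mult_right_mono) auto
    ultimately show ?case using ab by (auto simp: W_def frac_le)
  qed
  ultimately show "mean_sojourn a < mean_sojourn b"
    unfolding mean_sojourn_def using ab
    by (intro integral_less_AE [OF integrable_W_scaled integrable_W_scaled,
          where A = "{\<omega> \<in> space M. L \<omega> \<noteq> 0}"]) auto
qed

lemma qS_mean_sojourn:
  assumes "0 < C" "t \<in> {0..1}"
  shows "qS M L mu C R (R - C * mean_sojourn t) = t"
proof (cases "t = 1")
  case True
  then show ?thesis by (simp add: qS_eq)
next
  case False
  have "mean_sojourn t < mean_sojourn 1"
    using assms False by (intro strict_mono_onD [OF strict_mono_on_mean_sojourn]) auto
  then have "\<not> C * mean_sojourn 1 \<le> C * mean_sojourn t"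
    using assms by simp
  moreover have "(THE q. 0 \<le> q \<and> q < 1 \<and> C * mean_sojourn q = C * mean_sojourn t) = t"
    using assms False by (intro the_equality) (auto intro: strict_mono_on_eqD [OF strict_mono_on_mean_sojourn])
  ultimately show ?thesis by (simp add: qS_eq)
qed

lemma qS_in_unit:
  assumes "0 < C" "C / mu \<le> R - p"
  shows "qS M L mu C R p \<in> {0..1}"
proof (cases "C * mean_sojourn 1 \<le> R - p")
  case True
  then show ?thesis by (simp add: qS_eq)
next
  case False
  have "mean_sojourn 0 \<le> (R - p) / C" "(R - p) / C \<le> mean_sojourn 1"
    using assms False mu_pos by (simp_all add: mean_sojourn_0 field_simps)
  then obtain q where q: "q \<in> {0..1}" "mean_sojourn q = (R - p) / C"
    using IVT' [OF _ _ _ continuous_on_mean_sojourn] by fastforce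
  then have "p = R - C * mean_sojourn q" using assms by simp
  then show ?thesis using qS_mean_sojourn [OF assms(1) q(1)] q(1) by simp
qed

lemma opt_SWS:
  assumes "0 < lam" "lam < mu" "0 < C" "C / mu < R"
    and "C * mean_sojourn (min (optimal_rate mu C R) lam / lam) \<le> R"
  shows "opt mu C R (SWS M L lam mu C R) = welfare mu C R (min (optimal_rate mu C R) lam)"
proof -
  define t where "t = min (optimal_rate mu C R) lam / lam"
  have t: "t \<in> {0<..1}" unfolding t_def using optimal_fraction_bounds assms mu_pos by blast
  define p1 where "p1 = R - C * mean_sojourn t"
  have "mean_sojourn 0 < mean_sojourn t"
    using t by (intro strict_mono_onD [OF strict_mono_on_mean_sojourn]) auto
  then have "p1 \<in> {0..<R - C / mu}"
    using assms t mu_pos by (simp add: p1_def t_def mean_sojourn_0 field_simps)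
  moreover have "SWS M L lam mu C R p1 = welfare mu C R (min (optimal_rate mu C R) lam)"
    using qS_mean_sojourn [of C t] t assms(1,3) by (simp add: SWS_def SW_eq_welfare p1_def t_def)
  moreover have "SWS M L lam mu C R p \<le> welfare mu C R (min (optimal_rate mu C R) lam)"
    if "p \<in> {0..<R - C / mu}" for p
  proof -
    have "qS M L mu C R p \<in> {0..1}" using that assms(3) by (intro qS_in_unit) auto
    then show ?thesis
      using assms by (auto simp: SWS_def SW_eq_welfare mult_left_le intro: welfare_le_optimal)
  qed
  ultimately show ?thesis by (intro opt_eqI [of _ _ _ _ _ p1])
qed

lemma C_mean_sojourn_le_R_if_lbar_le_xi:
  assumes "0 < C" "0 < R" "lbar M L mu \<le> xi mu C R 0" "t \<in> {0..1}"
  shows "C * mean_sojourn t \<le> R"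
proof -
  have "mean_sojourn 0 < mean_sojourn 1" by (intro strict_mono_onD [OF strict_mono_on_mean_sojourn]) auto
  moreover have "0 < mean_sojourn 0" using mu_pos by (simp add: mean_sojourn_0)
  ultimately have "0 < mean_sojourn 1" by linarith
  moreover have "C / R \<le> 1 / mean_sojourn 1" using assms(3) by (simp add: lbar_eq xi_def)
  ultimately have "C * mean_sojourn 1 \<le> R" using assms(1,2) by (simp add: field_simps)
  moreover have "mean_sojourn t \<le> mean_sojourn 1"
    using assms(4) by (intro strict_mono_on_leD [OF strict_mono_on_mean_sojourn]) auto
  ultimately show ?thesis using assms(1) by (smt (verit) mult_left_mono)
qed

end

lemma C_mean_sojourn_le_R_if_lmax_le:
  assumes "0 < lam" "0 < C" "C / mu < R" "lmax \<le> (1 + sqrt (C / (R * mu))) * lam"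
  shows "C * mean_sojourn (min (optimal_rate mu C R) lam / lam) \<le> R"
proof -
  define s where "s = sqrt (C / (R * mu))"
  define t where "t = min (optimal_rate mu C R) lam / lam"
  have R: "0 < R" using divide_pos_pos [OF assms(2) mu_pos] assms(3) by linarith
  have s: "0 < s" "s < 1" using sqrt_cost_ratio_bounds [OF assms(2) mu_pos assms(3)] by (auto simp: s_def)
  have t: "t \<in> {0<..1}" unfolding t_def using optimal_fraction_bounds assms mu_pos by blast
  have "t * lmax \<le> optimal_rate mu C R / lam * ((1 + s) * lam)"
    using assms s t lmax_nonneg optimal_rate_pos [OF assms(2) mu_pos assms(3)] unfolding t_def s_def
    by (intro mult_mono divide_right_mono) (auto simp: optimal_rate_def)
  also have "\<dots> = mu - C / R"
    using assms(1) s R mu_pos by (simp add: optimal_rate_def s_def power2_eq_square field_simps)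
  finally have tl: "t * lmax \<le> mu - C / R" .
  have "AE \<omega> in M. W mu (t * L \<omega>) \<le> R / C"
    using AE_L_bounds
  proof eventually_elim
    case (elim \<omega>)
    then have "C / R \<le> mu - t * L \<omega>"
      using t tl by (smt (verit) greaterThanAtMost_iff mult_left_mono)
    then have "1 / (mu - t * L \<omega>) \<le> 1 / (C / R)"
      using divide_pos_pos [OF assms(2) R] by (intro divide_left_mono mult_pos_pos) auto
    then show ?case by (simp add: W_def)
  qed
  then have "mean_sojourn t \<le> R / C"
    unfolding mean_sojourn_def using t by (intro integral_le_const integrable_W_scaled) auto
  then show ?thesis using assms(2) by (simp add: t_def field_simps)
qed

end

theorem theorem4:
  fixes M :: "'a measure" and L :: "'a \<Rightarrow> real"
    and lam mu C R lmin lmax :: real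
  assumes P: "prob_space M"
    and Lmeas: "L \<in> borel_measurable M"
    and Lnonneg: "AE \<omega> in M. 0 \<le> L \<omega>"
    and nondeg: "\<not> (\<exists>c. AE \<omega> in M. L \<omega> = c)"
    and supp_bounds: "AE \<omega> in M. lmin \<le> L \<omega> \<and> L \<omega> \<le> lmax"
    and supp_min: "\<And>e. e > 0 \<Longrightarrow> measure M {\<omega>\<in>space M. L \<omega> < lmin + e} > 0"
    and supp_max: "\<And>e. e > 0 \<Longrightarrow> measure M {\<omega>\<in>space M. L \<omega> > lmax - e} > 0"
    and lam_pos: "0 < lam"
    and C_pos: "0 < C"
    and R_gt: "R > C / mu"
    and order: "0 \<le> lmin" "lmin < lam" "lam < lmax" "lmax < mu"
    and cases: "xi mu C R 0 \<ge> lbar M L mu \<or>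
                (xi mu C R 0 < lbar M L mu \<and> lmax \<le> (1 + sqrt (C / (R * mu))) * lam)"
  shows "opt mu C R (SWP M L lam mu C R) \<le> opt mu C R (SWC lam mu C R)
       \<and> opt mu C R (SWC lam mu C R) = opt mu C R (SWS M L lam mu C R)"
proof -
  \<comment> \<open>Not needed: \<open>supp_min\<close>, \<open>supp_max\<close>, the lower bound \<open>lmin\<close>, and \<open>xi mu C R 0 < lbar M L mu\<close> in case (ii).\<close>
  have "AE \<omega> in M. 0 \<le> L \<omega> \<and> L \<omega> \<le> lmax"
    using Lnonneg supp_bounds by eventually_elim auto
  then interpret bounded_belief M L mu lmax
    using P Lmeas order by (intro bounded_belief.intro bounded_belief_axioms.intro) auto
  have L_nonzero: "\<not> (AE \<omega> in M. L \<omega> = 0)" using nondeg by blast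
  have lam_less: "lam < mu" using order by linarith
  have R_pos: "0 < R" using divide_pos_pos [OF C_pos mu_pos] R_gt by linarith
  have "C * mean_sojourn (min (optimal_rate mu C R) lam / lam) \<le> R"
    using cases
  proof
    assume "lbar M L mu \<le> xi mu C R 0"
    then show ?thesis
      using optimal_fraction_bounds [OF lam_pos C_pos mu_pos R_gt]
      by (intro C_mean_sojourn_le_R_if_lbar_le_xi [OF L_nonzero C_pos R_pos]) auto
  qed (use C_mean_sojourn_le_R_if_lmax_le lam_pos C_pos R_gt in auto)
  then show ?thesis
    using opt_SWC opt_SWP_le opt_SWS [OF L_nonzero] P lam_pos lam_less C_pos R_gt by simp
qed

end
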